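(* In the setting described in the context, $$|\eta_h^{(2)}|-\gamma\le|J(u)-J(\tilde u)|\le|\eta_h^{(2)}|+\gamma,$$ where $$\gamma:=|J(u)-J(u_h^{(2)})|+|\mathcal{R}^{(3)}-\mathcal{R}^{(3)(2)}|+|\rho(\tilde u)(\tilde z)|+|\mathcal{R}^{(3)}|.$$
   Context: Let $U$ and $V$ be real Banach spaces with dual $V^*$. Let $\mathcal{A}:U\to V^*$ be a (nonlinear) operator that is three times continuously Fréchet differentiable, and let $J:U\to\mathbb{R}$ be three times continuously Fréchet differentiable. Notation: $\mathcal{A}(w)(v)$ is the value of $\mathcal{A}(w)\in V^*$ at $v\in V$. For fixed $v$, $\mathcal{A}'(w)(\varphi,v)$, $\mathcal{A}''(w)(\varphi,\psi,v)$ and $\mathcal{A}'''(w)(\varphi,\psi,\chi,v)$ denote the first, second and third Fréchet derivatives of $w\mapsto\mathcal{A}(w)(v)$ at $w$ in the directions $\varphi,\psi,\chi\in U$. Analogously, $J'(w)(\varphi)$ and $J'''(w)(\varphi,\psi,\chi)$ denote derivatives of $J$. Let $u\in U$ satisfy $\mathcal{A}(u)(v)=0$ for all $v\in V$, and let $z\in V$ satisfy $\mathcal{A}'(u)(\varphi,z)=J'(u)(\varphi)$ for all $\varphi\in U$. Let $U_h^{(2)}\subset U$ and $V_h^{(2)}\subset V$ be finite-dimensional subspaces. Let $u_h^{(2)}\in U_h^{(2)}$ satisfy $\mathcal{A}(u_h^{(2)})(v)=0$ for all $v\in V_h^{(2)}$. Let $z_h^{(2)}\in V_h^{(2)}$ satisfy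 $\mathcal{A}'(u_h^{(2)})(\varphi,z_h^{(2)})=J'(u_h^{(2)})(\varphi)$ for all $\varphi\in U_h^{(2)}$. Let $\tilde u\in U_h^{(2)}$ and $\tilde z\in V_h^{(2)}$ be arbitrary fixed elements. Define $\rho(\tilde u)(v):=-\mathcal{A}(\tilde u)(v)$ and $\rho^*(\tilde u,\tilde z)(\varphi):=J'(\tilde u)(\varphi)-\mathcal{A}'(\tilde u)(\varphi,\tilde z)$. With $e:=u-\tilde u$ and $e^*:=z-\tilde z$, define $$\mathcal{R}^{(3)}:=\frac12\int_0^1\Big[J'''(\tilde u+se)(e,e,e)-\mathcal{A}'''(\tilde u+se)(e,e,e,\tilde z+se^* )-3\mathcal{A}''(\tilde u+se)(e,e,e^* )\Big]s(s-1)\,ds.$$ Let $\mathcal{R}^{(3)(2)}$ be the same expression with $e,e^*,z$ replaced by $e^{(2)}:=u_h^{(2)}-\tilde u$, $e^{(2),*}:=z_h^{(2)}-\tilde z$, $z_h^{(2)}$. Define $\eta_h^{(2)}:=\tfrac12\rho(\tilde u)(z_h^{(2)}-\tilde z)+\tfrac12\rho^*(\tilde u,\tilde z)(u_h^{(2)}-\tilde u)$. *)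

theory Defs
  imports "HOL-Analysis.Analysis"
begin

text \<open>Dual space V* is rendered as the Banach space of bounded linear functionals
  'v =>L real.  Derivatives are blinfun-valued; the k-th derivative applied to
  directions phi, psi, chi and then to v.\<close>

definition rho :: "('u \<Rightarrow> ('v::real_normed_vector \<Rightarrow>\<^sub>L real)) \<Rightarrow> 'u \<Rightarrow> 'v \<Rightarrow> real" where
  "rho A ut v = - blinfun_apply (A ut) v"

definition rho_star ::
  "('u::real_normed_vector \<Rightarrow> ('u \<Rightarrow>\<^sub>L real)) \<Rightarrow>
   ('u \<Rightarrow> ('u \<Rightarrow>\<^sub>L ('v::real_normed_vector \<Rightarrow>\<^sub>L real))) \<Rightarrow> 'u \<Rightarrow> 'v \<Rightarrow> 'u \<Rightarrow> real" where
  "rho_star J1 A1 ut zt phi = blinfun_apply (J1 ut) phi - blinfun_apply (blinfun_apply (A1 ut) phi) zt"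

definition R3 ::
  "('u::real_normed_vector \<Rightarrow> ('u \<Rightarrow>\<^sub>L ('u \<Rightarrow>\<^sub>L ('u \<Rightarrow>\<^sub>L real)))) \<Rightarrow>
   ('u \<Rightarrow> ('u \<Rightarrow>\<^sub>L ('u \<Rightarrow>\<^sub>L ('v::real_normed_vector \<Rightarrow>\<^sub>L real)))) \<Rightarrow>
   ('u \<Rightarrow> ('u \<Rightarrow>\<^sub>L ('u \<Rightarrow>\<^sub>L ('u \<Rightarrow>\<^sub>L ('v \<Rightarrow>\<^sub>L real))))) \<Rightarrow>
   'u \<Rightarrow> 'v \<Rightarrow> 'u \<Rightarrow> 'v \<Rightarrow> real" where
  "R3 J3 A2 A3 ut zt e es =
     1/2 * integral {0..1} (\<lambda>s::real.
       (blinfun_apply (blinfun_apply (blinfun_apply (J3 (ut + s *\<^sub>R e)) e) e) e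
        - blinfun_apply (blinfun_apply (blinfun_apply (blinfun_apply (A3 (ut + s *\<^sub>R e)) e) e) e) (zt + s *\<^sub>R es)
        - 3 * blinfun_apply (blinfun_apply (blinfun_apply (A2 (ut + s *\<^sub>R e)) e) e) es)
       * (s * (s - 1)))"

definition eta ::
  "('u::real_normed_vector \<Rightarrow> ('u \<Rightarrow>\<^sub>L real)) \<Rightarrow>
   ('u \<Rightarrow> ('v::real_normed_vector \<Rightarrow>\<^sub>L real)) \<Rightarrow>
   ('u \<Rightarrow> ('u \<Rightarrow>\<^sub>L ('v \<Rightarrow>\<^sub>L real))) \<Rightarrow> 'u \<Rightarrow> 'v \<Rightarrow> 'u \<Rightarrow> 'v \<Rightarrow> real" where
  "eta J1 A A1 ut zt uh zh = 1/2 * rho A ut (zh - zt) + 1/2 * rho_star J1 A1 ut zt (uh - ut)"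

end

theory Submission
  imports Defs
begin

text \<open>Restrict the Lagrangian J x - A(x)(y) to the segment from (ut, zt) to the discrete
  solution (uh, zh); this gives a function g on [0, 1] with g 1 = J uh, g 0 = J ut + rho(ut)(zt),
  g' 1 = 0 by the discrete primal and dual equations, and g' 0 = 2 eta.  The trapezoidal rule
  with its Peano remainder then yields the exact identity J uh - J ut = eta + rho(ut)(zt) + R3 on the
  discrete errors, and both bounds follow from J u - J ut = (J u - J uh) + (J uh - J ut) and the
  triangle inequality for the remainder terms.  The continuous problem enters only through J u,
  and the Henstock-Kurzweil integral needs no continuity of the third derivatives.\<close>

lemma trapezoidal_rule_remainder:
  fixes g g' g'' g''' :: "real \<Rightarrow> real"
  assumes "a \<le> b"
    and g: "\<And>s. s \<in> {a..b} \<Longrightarrow> (g has_real_derivative g' s) (at s within {a..b})"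
    and g': "\<And>s. s \<in> {a..b} \<Longrightarrow> (g' has_real_derivative g'' s) (at s within {a..b})"
    and g'': "\<And>s. s \<in> {a..b} \<Longrightarrow> (g'' has_real_derivative g''' s) (at s within {a..b})"
  shows "g b - g a = (b - a) / 2 * (g' a + g' b)
           + 1/2 * integral {a..b} (\<lambda>s. g''' s * ((s - a) * (s - b)))"
proof -
  define H where "H s = g'' s * ((s - a) * (s - b)) - g' s * (2 * s - a - b) + 2 * g s" for s
  have "(H has_real_derivative g''' s * ((s - a) * (s - b))) (at s within {a..b})"
    if "s \<in> {a..b}" for s
    unfolding H_def using that
    by (auto intro!: derivative_eq_intros g g' g'' simp: algebra_simps)
  then have "((\<lambda>s. g''' s * ((s - a) * (s - b))) has_integral H b - H a) {a..b}"
    using \<open>a \<le> b\<close> by (intro fundamental_theorem_of_calculus)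
      (auto simp: has_real_derivative_iff_has_vector_derivative)
  then have "integral {a..b} (\<lambda>s. g''' s * ((s - a) * (s - b))) = H b - H a"
    by (rule integral_unique)
  then show ?thesis
    by (simp add: H_def field_simps)
qed

lemma has_vector_derivative_along_line:
  assumes "\<And>w. (F has_derivative blinfun_apply (F' w)) (at w)"
  shows "((\<lambda>s. F (x + s *\<^sub>R d)) has_vector_derivative F' (x + s *\<^sub>R d) d) (at s within S)"
proof -
  have "((\<lambda>s::real. x + s *\<^sub>R d) has_derivative (\<lambda>h. h *\<^sub>R d)) (at s within S)"
    by (auto intro!: derivative_eq_intros)
  from has_derivative_compose[OF this assms]
  show ?thesis by (simp add: has_vector_derivative_def blinfun.scaleR_right)
qed

lemma error_representation:
  fixes A :: "'u::real_normed_vector \<Rightarrow> ('v::real_normed_vector \<Rightarrow>\<^sub>L real)"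
    and J :: "'u \<Rightarrow> real"
  assumes dA: "\<And>w. (A has_derivative blinfun_apply (A1 w)) (at w)"
    and dA1: "\<And>w. (A1 has_derivative blinfun_apply (A2 w)) (at w)"
    and dA2: "\<And>w. (A2 has_derivative blinfun_apply (A3 w)) (at w)"
    and dJ: "\<And>w. (J has_derivative blinfun_apply (J1 w)) (at w)"
    and dJ1: "\<And>w. (J1 has_derivative blinfun_apply (J2 w)) (at w)"
    and dJ2: "\<And>w. (J2 has_derivative blinfun_apply (J3 w)) (at w)"
    and primal: "A x z = 0" "A x zt = 0"
    and dual: "A1 x (x - ut) z = J1 x (x - ut)"
  shows "J x - J ut = eta J1 A A1 ut zt x z + rho A ut zt + R3 J3 A2 A3 ut zt (x - ut) (z - zt)"
proof -
  define e where "e = x - ut"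
  define e' where "e' = z - zt"
  define p where "p s = ut + s *\<^sub>R e" for s :: real
  define q where "q s = zt + s *\<^sub>R e'" for s :: real
  define g where "g s = J (p s) - A (p s) (q s)" for s
  define g1 where "g1 s = J1 (p s) e - A1 (p s) e (q s) - A (p s) e'" for s
  define g2 where "g2 s = J2 (p s) e e - A2 (p s) e e (q s) - 2 * A1 (p s) e e'" for s
  define g3 where "g3 s = J3 (p s) e e e - A3 (p s) e e e (q s) - 3 * A2 (p s) e e e'" for s
  note line = has_vector_derivative_along_line[where x = ut and d = e, folded p_def]
  have q: "(q has_vector_derivative e') (at s within S)" for s S
    unfolding q_def by (auto intro!: derivative_eq_intros)
  note rules = has_vector_derivative_diff has_vector_derivative_mult_right
    blinfun.has_vector_derivative has_vector_derivative_const line q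
  have dg: "(g has_vector_derivative g1 s) (at s within S)" for s S
    unfolding g_def g1_def
    by (rule has_vector_derivative_eq_rhs, (rule rules dA dJ)+)
      (simp add: algebra_simps)
  have dg1: "(g1 has_vector_derivative g2 s) (at s within S)" for s S
    unfolding g1_def g2_def
    by (rule has_vector_derivative_eq_rhs, (rule rules dA dA1 dJ1)+)
      (simp add: algebra_simps)
  have dg2: "(g2 has_vector_derivative g3 s) (at s within S)" for s S
    unfolding g2_def g3_def
    by (rule has_vector_derivative_eq_rhs, (rule rules dA1 dA2 dJ2)+)
      (simp add: algebra_simps)
  have "g 1 - g 0 = (g1 0 + g1 1) / 2 + 1/2 * integral {0..1} (\<lambda>s. g3 s * (s * (s - 1)))"
    using trapezoidal_rule_remainder[of 0 1 g g1 g2 g3] dg dg1 dg2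
    by (simp add: has_real_derivative_iff_has_vector_derivative)
  moreover have "R3 J3 A2 A3 ut zt e e' = 1/2 * integral {0..1} (\<lambda>s. g3 s * (s * (s - 1)))"
    by (simp add: R3_def g3_def p_def q_def)
  moreover have "g1 0 = 2 * eta J1 A A1 ut zt x z"
    by (simp add: g1_def p_def q_def eta_def rho_def rho_star_def e_def e'_def)
  moreover have "g1 1 = 0"
    using primal dual by (simp add: g1_def p_def q_def e_def e'_def blinfun.diff_right)
  moreover have "g 1 = J x" "g 0 = J ut + rho A ut zt"
    using primal by (simp_all add: g_def p_def q_def e_def e'_def rho_def)
  ultimately show ?thesis
    by (simp add: e_def e'_def)
qed

theorem mainTheorem8:
  fixes A :: "'u::banach \<Rightarrow> ('v::banach \<Rightarrow>\<^sub>L real)"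
    and A1 :: "'u \<Rightarrow> ('u \<Rightarrow>\<^sub>L ('v \<Rightarrow>\<^sub>L real))"
    and A2 :: "'u \<Rightarrow> ('u \<Rightarrow>\<^sub>L ('u \<Rightarrow>\<^sub>L ('v \<Rightarrow>\<^sub>L real)))"
    and A3 :: "'u \<Rightarrow> ('u \<Rightarrow>\<^sub>L ('u \<Rightarrow>\<^sub>L ('u \<Rightarrow>\<^sub>L ('v \<Rightarrow>\<^sub>L real))))"
    and J :: "'u \<Rightarrow> real"
    and J1 :: "'u \<Rightarrow> ('u \<Rightarrow>\<^sub>L real)"
    and J2 :: "'u \<Rightarrow> ('u \<Rightarrow>\<^sub>L ('u \<Rightarrow>\<^sub>L real))"
    and J3 :: "'u \<Rightarrow> ('u \<Rightarrow>\<^sub>L ('u \<Rightarrow>\<^sub>L ('u \<Rightarrow>\<^sub>L real)))"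
    and u ut uh :: 'u and z zt zh :: 'v
    and Uh :: "'u set" and Vh :: "'v set"
  assumes dA: "\<And>w. (A has_derivative blinfun_apply (A1 w)) (at w)"
    and dA1: "\<And>w. (A1 has_derivative blinfun_apply (A2 w)) (at w)"
    and dA2: "\<And>w. (A2 has_derivative blinfun_apply (A3 w)) (at w)"
    and cA3: "continuous_on UNIV A3"
    and dJ: "\<And>w. (J has_derivative blinfun_apply (J1 w)) (at w)"
    and dJ1: "\<And>w. (J1 has_derivative blinfun_apply (J2 w)) (at w)"
    and dJ2: "\<And>w. (J2 has_derivative blinfun_apply (J3 w)) (at w)"
    and cJ3: "continuous_on UNIV J3"
    and primal: "\<And>v. blinfun_apply (A u) v = 0"
    and dual: "\<And>\<phi>. blinfun_apply (blinfun_apply (A1 u) \<phi>) z = blinfun_apply (J1 u) \<phi>"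
    and Uh_sub: "subspace Uh" and Uh_fin: "\<exists>B. finite B \<and> span B = Uh"
    and Vh_sub: "subspace Vh" and Vh_fin: "\<exists>B. finite B \<and> span B = Vh"
    and uh_in: "uh \<in> Uh"
    and primal_h: "\<And>v. v \<in> Vh \<Longrightarrow> blinfun_apply (A uh) v = 0"
    and zh_in: "zh \<in> Vh"
    and dual_h: "\<And>\<phi>. \<phi> \<in> Uh \<Longrightarrow>
        blinfun_apply (blinfun_apply (A1 uh) \<phi>) zh = blinfun_apply (J1 uh) \<phi>"
    and ut_in: "ut \<in> Uh" and zt_in: "zt \<in> Vh"
  shows "\<bar>eta J1 A A1 ut zt uh zh\<bar>
           - (\<bar>J u - J uh\<bar> + \<bar>R3 J3 A2 A3 ut zt (u - ut) (z - zt) - R3 J3 A2 A3 ut zt (uh - ut) (zh - zt)\<bar>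
              + \<bar>rho A ut zt\<bar> + \<bar>R3 J3 A2 A3 ut zt (u - ut) (z - zt)\<bar>)
         \<le> \<bar>J u - J ut\<bar>
       \<and> \<bar>J u - J ut\<bar>
         \<le> \<bar>eta J1 A A1 ut zt uh zh\<bar>
           + (\<bar>J u - J uh\<bar> + \<bar>R3 J3 A2 A3 ut zt (u - ut) (z - zt) - R3 J3 A2 A3 ut zt (uh - ut) (zh - zt)\<bar>
              + \<bar>rho A ut zt\<bar> + \<bar>R3 J3 A2 A3 ut zt (u - ut) (z - zt)\<bar>)"
proof -
  have "uh - ut \<in> Uh"
    using Uh_sub uh_in ut_in by (rule subspace_diff)
  then have "J uh - J ut
      = eta J1 A A1 ut zt uh zh + rho A ut zt + R3 J3 A2 A3 ut zt (uh - ut) (zh - zt)"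
    by (rule error_representation[OF dA dA1 dA2 dJ dJ1 dJ2
          primal_h[OF zh_in] primal_h[OF zt_in] dual_h])
  then show ?thesis
    by linarith
qed

end
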